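(* Let $H$ be a real Hilbert space, $C\subset H$ a nonempty closed convex set, and $A,F:H\to H$ operators. (a) Assume that the couple $(A,F)$ is $\gamma$-strongly monotone for some $\gamma>0$, and that $x^*$ is a solution of $\mathrm{GVI}(A,F,C)$. Then for all $f\in C$ and all $y\in H$, $$\langle Fy-f,\,Ay-Ax^*\rangle+\langle f-Fx^*,\,Ay\rangle\ \ge\ \gamma\|y-x^*\|^2 .$$ (b) Assume that the couple $(A,F)$ is monotone. Then $x^*\in H$ is a solution of $\mathrm{GVI}(A,F,C)$ if and only if $Fx^*\in C$ and $$\langle Ay-Ax^*,\,Fy-f\rangle+\langle Ay,\,f-Fx^*\rangle\ \ge\ 0\qquad\text{for all } y\in H,\ f\in C.$$
   Context: The general variational inequality $\mathrm{GVI}(A,F,C)$ is the problem: find $x^*\in H$ such that $Fx^*\in C$ and $\langle Ax^*,y-Fx^*\rangle\ge 0$ for all $y\in C$. A couple $(A,F)$ of operators $H\to H$ is called $\gamma$-strongly monotone ($\gamma>0$) if $\langle Ax-Ay,Fx-Fy\rangle\ge\gamma\|x-y\|^2$ for all $x,y\in H$, and monotone if $\langle Ax-Ay,Fx-Fy\rangle\ge 0$ for all $x,y\in H$. *)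

theory Defs
  imports "HOL-Analysis.Analysis"
begin

definition GVI :: "('a::real_inner \<Rightarrow> 'a) \<Rightarrow> ('a \<Rightarrow> 'a) \<Rightarrow> 'a set \<Rightarrow> 'a \<Rightarrow> bool" where
  "GVI A F C x \<longleftrightarrow> F x \<in> C \<and> (\<forall>y\<in>C. inner (A x) (y - F x) \<ge> 0)"

definition strongly_monotone_couple :: "('a::real_inner \<Rightarrow> 'a) \<Rightarrow> ('a \<Rightarrow> 'a) \<Rightarrow> real \<Rightarrow> bool" where
  "strongly_monotone_couple A F \<gamma> \<longleftrightarrow>
     (\<forall>x y. inner (A x - A y) (F x - F y) \<ge> \<gamma> * (norm (x - y))\<^sup>2)"

definition monotone_couple :: "('a::real_inner \<Rightarrow> 'a) \<Rightarrow> ('a \<Rightarrow> 'a) \<Rightarrow> bool" where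
  "monotone_couple A F \<longleftrightarrow> (\<forall>x y. inner (A x - A y) (F x - F y) \<ge> 0)"

end

theory Submission
  imports Defs
begin

text \<open>The left-hand side of both inequalities rearranges to
  \<open>\<langle>Ay - Ax*, Fy - Fx*\<rangle> + \<langle>Ax*, f - Fx*\<rangle>\<close>: the first term is controlled by
  (strong) monotonicity of the couple, the second is nonnegative because \<open>x*\<close> solves the
  variational inequality. Conversely, choosing \<open>y = x*\<close> collapses the inequality of (b) to
  the variational inequality itself, so that direction needs no monotonicity.\<close>

lemma inner_gap_rearrange:
  fixes ay ax fy fx f :: "'a::real_inner"
  shows "inner (fy - f) (ay - ax) + inner (f - fx) ay = inner (ay - ax) (fy - fx) + inner ax (f - fx)"
  by (simp add: inner_diff_left inner_diff_right inner_commute[of fy] inner_commute[of fx]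
      inner_commute[of f] algebra_simps)

lemma monotone_couple_iff_strongly_monotone_0:
  "monotone_couple A F \<longleftrightarrow> strongly_monotone_couple A F 0"
  by (simp add: monotone_couple_def strongly_monotone_couple_def)

lemma GVI_strongly_monotone_gap_ge:
  assumes "strongly_monotone_couple A F \<gamma>" and "GVI A F C x" and "f \<in> C"
  shows "inner (F y - f) (A y - A x) + inner (f - F x) (A y) \<ge> \<gamma> * (norm (y - x))\<^sup>2"
proof -
  have "inner (A y - A x) (F y - F x) \<ge> \<gamma> * (norm (y - x))\<^sup>2"
    using assms(1) by (simp add: strongly_monotone_couple_def)
  moreover have "inner (A x) (f - F x) \<ge> 0"
    using assms(2,3) by (simp add: GVI_def)
  ultimately show ?thesis
    by (simp add: inner_gap_rearrange)
qed

lemma GVI_monotone_gap_nonneg: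
  assumes "monotone_couple A F" and "GVI A F C x" and "f \<in> C"
  shows "inner (A y - A x) (F y - f) + inner (A y) (f - F x) \<ge> 0"
  using GVI_strongly_monotone_gap_ge[of A F 0 C x f y] assms
  by (simp add: monotone_couple_iff_strongly_monotone_0 inner_commute)

lemma GVI_if_gap_nonneg:
  assumes "F x \<in> C"
    and "\<And>y f. f \<in> C \<Longrightarrow> inner (A y - A x) (F y - f) + inner (A y) (f - F x) \<ge> 0"
  shows "GVI A F C x"
  using assms(1) assms(2)[of _ x] by (simp add: GVI_def)

theorem lemma1p1:
  fixes A F :: "'a::{real_inner, complete_space} \<Rightarrow> 'a" and C :: "'a set"
  assumes "C \<noteq> {}" and "closed C" and "convex C"
  shows "(\<forall>\<gamma> x. \<gamma> > 0 \<longrightarrow> strongly_monotone_couple A F \<gamma> \<longrightarrow> GVI A F C x \<longrightarrow>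
           (\<forall>f\<in>C. \<forall>y. inner (F y - f) (A y - A x) + inner (f - F x) (A y)
                        \<ge> \<gamma> * (norm (y - x))\<^sup>2))
         \<and> (monotone_couple A F \<longrightarrow> (\<forall>x. GVI A F C x \<longleftrightarrow>
           (F x \<in> C \<and> (\<forall>y. \<forall>f\<in>C. inner (A y - A x) (F y - f) + inner (A y) (f - F x) \<ge> 0))))"
proof (intro conjI impI allI ballI)
  fix \<gamma> x f y
  assume "strongly_monotone_couple A F \<gamma>" "GVI A F C x" "f \<in> C"
  then show "inner (F y - f) (A y - A x) + inner (f - F x) (A y) \<ge> \<gamma> * (norm (y - x))\<^sup>2"
    by (rule GVI_strongly_monotone_gap_ge)
next
  fix x
  assume "monotone_couple A F"
  then show "GVI A F C x \<longleftrightarrow>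
      F x \<in> C \<and> (\<forall>y. \<forall>f\<in>C. inner (A y - A x) (F y - f) + inner (A y) (f - F x) \<ge> 0)"
    using GVI_monotone_gap_nonneg GVI_if_gap_nonneg GVI_def by metis
qed

end
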